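(* Let $A>0$, $C>0$, $m>0$, $g>0$, $z>0$ and $\mathfrak{M}_3\in\mathbb{R}$. Consider the differential system on $\mathbb{R}^6$ (heavy symmetric top) $$\dot{\vec M}=\vec M\times \mathbb{I}^{-1}\vec M+mg\,\vec\gamma\times\vec r_G,\qquad \dot{\vec\gamma}=\vec\gamma\times\mathbb{I}^{-1}\vec M,$$ where $\vec M=(M_1,M_2,M_3)$, $\vec\gamma=(\gamma_1,\gamma_2,\gamma_3)$, $\mathbb{I}=\mathrm{diag}(A,A,C)$, $\vec r_G=(0,0,z)$ and $\times$ is the cross product in $\mathbb{R}^3$. The point $x_e=(0,0,\mathfrak{M}_3,0,0,1)$ is an equilibrium of this system, and the functions $$H=\tfrac12\Big(\tfrac{M_1^2}{A}+\tfrac{M_2^2}{A}+\tfrac{M_3^2}{C}\Big)+mgz\gamma_3,\quad C_1=\gamma_1^2+\gamma_2^2+\gamma_3^2,\quad C_2=M_1\gamma_1+M_2\gamma_2+M_3\gamma_3,\quad F=M_3$$ are conserved quantities. Then $x_e$ is stable with respect to the set of conserved quantities $\{H,C_1,C_2,F\}$ if and only if $\mathfrak{M}_3^2\geq 4Amgz$.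
   Context: Definition: an equilibrium point $x_e$ of a differential equation $\dot x=f(x)$ on an open set $D\subset\mathbb{R}^n$ is called stable with respect to a set of conserved quantities $\{F_1,\dots,F_k\}$ if there exists a continuous function $\Phi:\mathbb{R}^k\to\mathbb{R}$ such that the function $x\mapsto \Phi(F_1(x),\dots,F_k(x))-\Phi(F_1(x_e),\dots,F_k(x_e))$ is positive definite at $x_e$, i.e. it vanishes at $x_e$ and is strictly positive at every $x\neq x_e$ in some neighborhood of $x_e$. *)

theory Defs
  imports "HOL-Analysis.Analysis"
begin

definition stable_wrt :: "(real^'n \<Rightarrow> real^'n) \<Rightarrow> real^'n \<Rightarrow> (real^'n \<Rightarrow> real^'k) \<Rightarrow> bool" where
  "stable_wrt f xe F \<longleftrightarrow> f xe = 0 \<and>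
     (\<exists>\<Phi> :: real^'k \<Rightarrow> real. continuous_on UNIV \<Phi> \<and>
        (\<exists>e>0. \<forall>x. x \<noteq> xe \<and> dist x xe < e \<longrightarrow> \<Phi> (F x) - \<Phi> (F xe) > 0))"

text \<open>Heavy symmetric top; state x = (M1,M2,M3,g1,g2,g3), I = diag(A,A,C), r_G = (0,0,z).
  dM = M x I^{-1}M + m g (gamma x r_G),  dgamma = gamma x I^{-1}M.\<close>
definition top_field :: "real \<Rightarrow> real \<Rightarrow> real \<Rightarrow> real \<Rightarrow> real \<Rightarrow> real^6 \<Rightarrow> real^6" where
  "top_field A C m g z x =
     (let M1 = x$1; M2 = x$2; M3 = x$3; g1 = x$4; g2 = x$5; g3 = x$6;
          W1 = M1 / A; W2 = M2 / A; W3 = M3 / C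
      in vector [ M2 * W3 - M3 * W2 + m * g * (g2 * z - g3 * 0),
                  M3 * W1 - M1 * W3 + m * g * (g3 * 0 - g1 * z),
                  M1 * W2 - M2 * W1 + m * g * (g1 * 0 - g2 * 0),
                  g2 * W3 - g3 * W2,
                  g3 * W1 - g1 * W3,
                  g1 * W2 - g2 * W1 ])"

definition top_H :: "real \<Rightarrow> real \<Rightarrow> real \<Rightarrow> real \<Rightarrow> real \<Rightarrow> real^6 \<Rightarrow> real" where
  "top_H A C m g z x = (1/2) * ((x$1)^2 / A + (x$2)^2 / A + (x$3)^2 / C) + m * g * z * x$6"

definition top_C1 :: "real^6 \<Rightarrow> real" where
  "top_C1 x = (x$4)^2 + (x$5)^2 + (x$6)^2"

definition top_C2 :: "real^6 \<Rightarrow> real" where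
  "top_C2 x = x$1 * x$4 + x$2 * x$5 + x$3 * x$6"

definition top_F :: "real^6 \<Rightarrow> real" where
  "top_F x = x$3"

definition top_conserved :: "real \<Rightarrow> real \<Rightarrow> real \<Rightarrow> real \<Rightarrow> real \<Rightarrow> real^6 \<Rightarrow> real^4" where
  "top_conserved A C m g z x = vector [top_H A C m g z x, top_C1 x, top_C2 x, top_F x]"

end

theory Submission imports Defs begin

(* By definition, stability asks for a continuous Phi with Phi o F - Phi(F xe) positive definite.
   Such a Phi exists iff xe is an isolated point of its own level set {x. F x = F xe}: one may
   take Phi y = |y - F xe|^2.  So the theorem reduces to describing the level set of xe.

   Writing u = 1 - gamma3 and K = 2 A m g z, the level set of xe is cut out by
     M3 = M3(xe),   |M_perp|^2 = K u,   M_perp . gamma_perp = M3 u,   |gamma_perp|^2 = u (2 - u),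
   where M_perp = (M1, M2), gamma_perp = (gamma1, gamma2).
   If M3^2 >= 2K, Cauchy-Schwarz in the plane forces u = 0, hence the level set is {xe}.
   If M3^2 < 2K, an explicit curve u |-> level_curve in the level set tends to xe as u -> 0+,
   so xe is not isolated. *)

lemma vector_6_nth [simp]:
  "(vector [a,b,c,d,e,f] :: ('a::zero)^6)$1 = a"
  "(vector [a,b,c,d,e,f] :: ('a::zero)^6)$2 = b"
  "(vector [a,b,c,d,e,f] :: ('a::zero)^6)$3 = c"
  "(vector [a,b,c,d,e,f] :: ('a::zero)^6)$4 = d"
  "(vector [a,b,c,d,e,f] :: ('a::zero)^6)$5 = e"
  "(vector [a,b,c,d,e,f] :: ('a::zero)^6)$6 = f"
  unfolding vector_def by simp_all

lemma vector_4_nth [simp]: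
  "(vector [a,b,c,d] :: ('a::zero)^4)$1 = a"
  "(vector [a,b,c,d] :: ('a::zero)^4)$2 = b"
  "(vector [a,b,c,d] :: ('a::zero)^4)$3 = c"
  "(vector [a,b,c,d] :: ('a::zero)^4)$4 = d"
  unfolding vector_def by simp_all

lemma exhaust_6:
  fixes i :: 6
  shows "i = 1 \<or> i = 2 \<or> i = 3 \<or> i = 4 \<or> i = 5 \<or> i = 6"
proof (induct i)
  case (of_int k)
  then have "k = 0 \<or> k = 1 \<or> k = 2 \<or> k = 3 \<or> k = 4 \<or> k = 5" by fastforce
  then show ?case by auto
qed

lemma forall_6: "(\<forall>i::6. P i) \<longleftrightarrow> P 1 \<and> P 2 \<and> P 3 \<and> P 4 \<and> P 5 \<and> P 6"
  by (metis exhaust_6)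

text \<open>For any system and any family of conserved quantities, stability of an equilibrium means
  exactly that it is an isolated point of its level set; the witness is the squared distance
  to the value of the family at the equilibrium.\<close>

lemma stable_wrt_iff_isolated:
  "stable_wrt f xe F \<longleftrightarrow>
     f xe = 0 \<and> (\<exists>e>0. \<forall>x. x \<noteq> xe \<and> dist x xe < e \<longrightarrow> F x \<noteq> F xe)"
proof
  assume "stable_wrt f xe F"
  then show "f xe = 0 \<and> (\<exists>e>0. \<forall>x. x \<noteq> xe \<and> dist x xe < e \<longrightarrow> F x \<noteq> F xe)"
    unfolding stable_wrt_def by (metis less_irrefl diff_self)
next
  assume isolated: "f xe = 0 \<and> (\<exists>e>0. \<forall>x. x \<noteq> xe \<and> dist x xe < e \<longrightarrow> F x \<noteq> F xe)"
  define \<Phi> where "\<Phi> y = (norm (y - F xe))\<^sup>2" for y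
  have "continuous_on UNIV \<Phi>" unfolding \<Phi>_def by (intro continuous_intros)
  moreover have "\<exists>e>0. \<forall>x. x \<noteq> xe \<and> dist x xe < e \<longrightarrow> \<Phi> (F x) - \<Phi> (F xe) > 0"
    using isolated unfolding \<Phi>_def by force
  ultimately show "stable_wrt f xe F" unfolding stable_wrt_def using isolated by blast
qed

lemma not_isolated_by_curve:
  fixes p :: "real \<Rightarrow> 'a::metric_space"
  assumes lim: "(p \<longlongrightarrow> xe) (at_right 0)"
    and on_level: "eventually (\<lambda>u. p u \<noteq> xe \<and> F (p u) = F xe) (at_right 0)"
  shows "\<not> (\<exists>e>0. \<forall>x. x \<noteq> xe \<and> dist x xe < e \<longrightarrow> F x \<noteq> F xe)"
proof
  assume "\<exists>e>0. \<forall>x. x \<noteq> xe \<and> dist x xe < e \<longrightarrow> F x \<noteq> F xe"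
  then obtain e where "e > 0" and isolated: "\<And>x. x \<noteq> xe \<Longrightarrow> dist x xe < e \<Longrightarrow> F x \<noteq> F xe"
    by blast
  have "eventually (\<lambda>u. dist (p u) xe < e) (at_right 0)"
    using tendstoD[OF lim \<open>e > 0\<close>] .
  with on_level have "eventually (\<lambda>u. (p u \<noteq> xe \<and> F (p u) = F xe) \<and> dist (p u) xe < e) (at_right 0)"
    by (rule eventually_conj)
  then obtain u where "p u \<noteq> xe" "F (p u) = F xe" "dist (p u) xe < e"
    using eventually_happens'[OF trivial_limit_at_right_real] by blast
  then show False using isolated by blast
qed

abbreviation top_sleeping :: "real \<Rightarrow> real^6" where
  "top_sleeping M3 \<equiv> vector [0, 0, M3, 0, 0, 1]"

lemma top_sleeping_equilibrium: "top_field A C m g z (top_sleeping M3) = 0"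
  unfolding top_field_def Let_def vec_eq_iff forall_6 by simp

text \<open>The level set of the sleeping top in reduced coordinates, with \<open>u = 1 - \<gamma>\<^sub>3\<close>: the energy
  equation becomes \<open>|M\<^sub>\<bottom>|\<^sup>2 = K u\<close>, Casimir \<open>C\<^sub>2\<close> becomes \<open>M\<^sub>\<bottom>\<cdot>\<gamma>\<^sub>\<bottom> = M\<^sub>3 u\<close>, and the unit length
  of \<open>\<gamma>\<close> becomes \<open>|\<gamma>\<^sub>\<bottom>|\<^sup>2 = u (1 + \<gamma>\<^sub>3)\<close>.\<close>

lemma top_level_set:
  assumes "A \<noteq> 0"
  shows "top_conserved A C m g z x = top_conserved A C m g z (top_sleeping M3) \<longleftrightarrow>
     x$3 = M3 \<and>
     (x$1)\<^sup>2 + (x$2)\<^sup>2 = 2*A*m*g*z * (1 - x$6) \<and>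
     x$1*x$4 + x$2*x$5 = M3 * (1 - x$6) \<and>
     (x$4)\<^sup>2 + (x$5)\<^sup>2 = (1 - x$6) * (1 + x$6)"
proof -
  have energy: "x$3 = M3 \<Longrightarrow> top_H A C m g z x = top_H A C m g z (top_sleeping M3) \<longleftrightarrow>
      (x$1)\<^sup>2 + (x$2)\<^sup>2 = 2*A*m*g*z * (1 - x$6)"
    using assms unfolding top_H_def by (simp add: field_simps)
  show ?thesis
    unfolding top_conserved_def vec_eq_iff forall_4
    using energy by (auto simp: top_C1_def top_C2_def top_F_def algebra_simps power2_eq_square)
qed

text \<open>For
  \<open>u > 0\<close>, Cauchy-Schwarz \<open>(M\<^sub>\<bottom>\<cdot>\<gamma>\<^sub>\<bottom>)\<^sup>2 \<le> |M\<^sub>\<bottom>|\<^sup>2 |\<gamma>\<^sub>\<bottom>|\<^sup>2\<close> gives \<open>M\<^sub>3\<^sup>2 \<le> K (1 + \<gamma>\<^sub>3) < 2K\<close>.\<close>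

lemma reduced_level_set_trivial:
  fixes a b c d w M K :: real
  assumes "K > 0" and fast: "M\<^sup>2 \<ge> 2 * K"
    and energy: "a\<^sup>2 + b\<^sup>2 = K * (1 - w)"
    and momentum: "a*c + b*d = M * (1 - w)"
    and unit: "c\<^sup>2 + d\<^sup>2 = (1 - w) * (1 + w)"
  shows "a = 0 \<and> b = 0 \<and> c = 0 \<and> d = 0 \<and> w = 1"
proof -
  have "w\<^sup>2 = 1 - (c\<^sup>2 + d\<^sup>2)" using unit by (simp add: algebra_simps power2_eq_square)
  then have "w\<^sup>2 \<le> 1" by simp
  then have "w \<le> 1" by (metis abs_le_D1 abs_square_le_1)
  have "w = 1"
  proof (rule ccontr)
    assume "w \<noteq> 1"
    define u where "u = 1 - w"
    have "u > 0" using \<open>w \<le> 1\<close> \<open>w \<noteq> 1\<close> unfolding u_def by simp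
    have "M\<^sup>2 * u\<^sup>2 = (a*c + b*d)\<^sup>2"
      using momentum unfolding u_def by (simp add: power_mult_distrib)
    also have "\<dots> \<le> (a\<^sup>2 + b\<^sup>2) * (c\<^sup>2 + d\<^sup>2)"
      using zero_le_power2[of "a*d - b*c"] by (simp add: algebra_simps power2_eq_square)
    also have "\<dots> = (K * (1 + w)) * u\<^sup>2"
      using energy unit unfolding u_def by (simp add: power2_eq_square)
    finally have "M\<^sup>2 * u\<^sup>2 \<le> (K * (1 + w)) * u\<^sup>2" .
    then have "M\<^sup>2 \<le> K * (1 + w)" using \<open>u > 0\<close> by simp
    moreover have "K * (1 + w) < 2 * K" using \<open>K > 0\<close> \<open>u > 0\<close> unfolding u_def by simp
    ultimately show False using fast by simp
  qed
  then show ?thesis using energy unit by (simp add: add_nonneg_eq_0_iff)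
qed

text \<open>Slow top: if \<open>M\<^sub>3\<^sup>2 < 2K\<close>, the level set contains the curve below.  Its parameter \<open>u\<close> is
  \<open>1 - \<gamma>\<^sub>3\<close>; \<open>\<gamma>\<^sub>\<bottom>\<close> is chosen along the first axis and \<open>M\<^sub>\<bottom>\<close> is then determined by the
  reduced equations, which are solvable for small \<open>u \<ge> 0\<close> precisely because \<open>M\<^sub>3\<^sup>2/2 < K\<close>.\<close>

definition level_curve :: "real \<Rightarrow> real \<Rightarrow> real \<Rightarrow> real^6" where
  "level_curve M K u =
     vector [M * sqrt (u / (2 - u)), sqrt (u * (K - M\<^sup>2 / (2 - u))), M,
             sqrt (u * (2 - u)), 0, 1 - u]"

lemma level_curve_reduced:
  assumes "0 \<le> u" "u < 2" "M\<^sup>2 / (2 - u) \<le> K"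
  defines "x \<equiv> level_curve M K u"
  shows "x$3 = M \<and>
     (x$1)\<^sup>2 + (x$2)\<^sup>2 = K * (1 - x$6) \<and>
     x$1*x$4 + x$2*x$5 = M * (1 - x$6) \<and>
     (x$4)\<^sup>2 + (x$5)\<^sup>2 = (1 - x$6) * (1 + x$6)"
proof -
  have "sqrt (u / (2 - u)) * sqrt (u * (2 - u)) = u"
    using assms(1,2) by (simp add: real_sqrt_mult[symmetric])
  moreover have "u * (K - M\<^sup>2 / (2 - u)) \<ge> 0" using assms(1,3) by simp
  moreover have "u * (2 - u) \<ge> 0" "u / (2 - u) \<ge> 0" using assms(1,2) by simp_all
  ultimately show ?thesis
    unfolding x_def level_curve_def
    by (simp add: power_mult_distrib algebra_simps)
qed

lemma level_curve_tendsto: "(level_curve M K \<longlongrightarrow> top_sleeping M) (at_right 0)"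
proof (rule vec_tendstoI)
  fix i :: 6
  have "isCont (\<lambda>u. level_curve M K u $ i) 0"
    using exhaust_6[of i] unfolding level_curve_def
    by (elim disjE) (simp_all add: continuous_intros)
  then have "((\<lambda>u. level_curve M K u $ i) \<longlongrightarrow> level_curve M K 0 $ i) (at_right 0)"
    by (simp add: isCont_def filterlim_at_split)
  moreover have "level_curve M K 0 = top_sleeping M"
    unfolding level_curve_def by simp
  ultimately show "((\<lambda>u. level_curve M K u $ i) \<longlongrightarrow> top_sleeping M $ i) (at_right 0)"
    by simp
qed

lemma fast_top_level_set:
  assumes "2*A*m*g*z > 0" and fast: "M3\<^sup>2 \<ge> 2 * (2*A*m*g*z)"
    and "top_conserved A C m g z x = top_conserved A C m g z (top_sleeping M3)"
  shows "x = top_sleeping M3"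
proof -
  have "A \<noteq> 0" using assms(1) by auto
  then have "x$3 = M3" and "(x$1)\<^sup>2 + (x$2)\<^sup>2 = 2*A*m*g*z * (1 - x$6)"
    and "x$1*x$4 + x$2*x$5 = M3 * (1 - x$6)" and "(x$4)\<^sup>2 + (x$5)\<^sup>2 = (1 - x$6) * (1 + x$6)"
    using assms(3) top_level_set by blast+
  with assms(1) fast have "x$1 = 0 \<and> x$2 = 0 \<and> x$4 = 0 \<and> x$5 = 0 \<and> x$6 = 1"
    using reduced_level_set_trivial by blast
  with \<open>x$3 = M3\<close> show ?thesis
    unfolding vec_eq_iff forall_6 by simp
qed

text \<open>Slow top: the sleeping top is a limit of other points of its level set, along
  \<open>level_curve\<close>; the constraint \<open>M\<^sub>3\<^sup>2/(2 - u) \<le> K\<close> holds near \<open>u = 0\<close> by continuity.\<close>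

lemma slow_top_not_isolated:
  assumes "A \<noteq> 0" and slow: "M3\<^sup>2 < 2 * (2*A*m*g*z)"
  shows "\<not> (\<exists>e>0. \<forall>x. x \<noteq> top_sleeping M3 \<and> dist x (top_sleeping M3) < e \<longrightarrow>
            top_conserved A C m g z x \<noteq> top_conserved A C m g z (top_sleeping M3))"
proof (rule not_isolated_by_curve[OF level_curve_tendsto])
  define K where "K = 2*A*m*g*z"
  have "((\<lambda>u. M3\<^sup>2 / (2 - u)) \<longlongrightarrow> M3\<^sup>2 / 2) (at_right (0::real))"
    by (rule tendsto_mono[OF at_le]) (auto intro!: tendsto_eq_intros)
  then have "eventually (\<lambda>u. M3\<^sup>2 / (2 - u) < K) (at_right 0)"
    using slow unfolding K_def by (intro order_tendstoD(2)) auto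
  moreover have "eventually (\<lambda>u. u \<in> {0<..<2}) (at_right (0::real))"
    by (rule eventually_at_right_real) simp
  ultimately show "eventually (\<lambda>u. level_curve M3 K u \<noteq> top_sleeping M3 \<and>
      top_conserved A C m g z (level_curve M3 K u) = top_conserved A C m g z (top_sleeping M3))
      (at_right 0)"
  proof eventually_elim
    case (elim u)
    then have "level_curve M3 K u $ 6 \<noteq> 1" unfolding level_curve_def by simp
    moreover have "top_conserved A C m g z (level_curve M3 K u) =
        top_conserved A C m g z (top_sleeping M3)"
      using level_curve_reduced[of u M3 K] elim \<open>A \<noteq> 0\<close>
      unfolding top_level_set[OF \<open>A \<noteq> 0\<close>] K_def by simp
    ultimately show ?case by auto
  qed
qed

theorem mainTheorem2:
  fixes A C m g z M3 :: real
  assumes "A > 0" and "C > 0" and "m > 0" and "g > 0" and "z > 0"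
  shows "stable_wrt (top_field A C m g z) (vector [0, 0, M3, 0, 0, 1])
           (top_conserved A C m g z)
         \<longleftrightarrow> M3^2 \<ge> 4 * A * m * g * z"
proof -
  let ?F = "top_conserved A C m g z" and ?xe = "top_sleeping M3"
  have K_pos: "2*A*m*g*z > 0" using assms by simp
  have "stable_wrt (top_field A C m g z) ?xe ?F \<longleftrightarrow>
      (\<exists>e>0. \<forall>x. x \<noteq> ?xe \<and> dist x ?xe < e \<longrightarrow> ?F x \<noteq> ?F ?xe)"
    using stable_wrt_iff_isolated top_sleeping_equilibrium by blast
  also have "\<dots> \<longleftrightarrow> M3\<^sup>2 \<ge> 2 * (2*A*m*g*z)"
  proof
    assume "\<exists>e>0. \<forall>x. x \<noteq> ?xe \<and> dist x ?xe < e \<longrightarrow> ?F x \<noteq> ?F ?xe"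
    then show "M3\<^sup>2 \<ge> 2 * (2*A*m*g*z)"
      using slow_top_not_isolated[of A M3 m g z C] \<open>A > 0\<close> by force
  next
    assume "M3\<^sup>2 \<ge> 2 * (2*A*m*g*z)"
    then have "\<forall>x. x \<noteq> ?xe \<and> dist x ?xe < 1 \<longrightarrow> ?F x \<noteq> ?F ?xe"
      using fast_top_level_set[OF K_pos] by blast
    then show "\<exists>e>0. \<forall>x. x \<noteq> ?xe \<and> dist x ?xe < e \<longrightarrow> ?F x \<noteq> ?F ?xe"
      by (intro exI[of _ 1]) simp
  qed
  finally show ?thesis by (simp add: mult.assoc)
qed

end
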